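(* Let $G$ be a compact abelian group with discrete dual group $\Gamma$ and let $a, b \in \mathbb{N}$ be coprime. A subset $E \subset \Gamma$ is $(ab)$-PR if and only if $E$ is both $a$-PR and $b$-PR.
   Context: Characters are written multiplicatively; $\mathbb{Z}_N$ is identified with the $N$-th roots of unity in the unit circle $\mathbb{T}$. For $N \in \mathbb{N}$, a subset $E \subset \Gamma$ is $N$-PR if for every function $\varphi: E \to \mathbb{Z}_N$ there exists $x \in G$ with $\varphi(\gamma) = \gamma(x)$ for all $\gamma \in E$. *)

theory Defs
  imports "HOL-Analysis.Analysis"
begin

definition dual_group :: "('g::{topological_space, ab_group_add} \<Rightarrow> complex) set" where
  "dual_group = {chi. continuous_on UNIV chi \<and> (\<forall>x. norm (chi x) = 1) \<and>
                      (\<forall>x y. chi (x + y) = chi x * chi y)}"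

text \<open>Z_N identified with the N-th roots of unity in the unit circle.\<close>
definition roots_of_unity :: "nat \<Rightarrow> complex set" where
  "roots_of_unity N = {z. z ^ N = 1}"

definition N_PR :: "nat \<Rightarrow> ('g \<Rightarrow> complex) set \<Rightarrow> bool" where
  "N_PR N E \<longleftrightarrow> (\<forall>\<phi>. (\<forall>\<gamma>\<in>E. \<phi> \<gamma> \<in> roots_of_unity N) \<longrightarrow>
                       (\<exists>x::'g. \<forall>\<gamma>\<in>E. \<phi> \<gamma> = \<gamma> x))"

end

theory Submission
  imports Defs
begin

text \<open>Restriction to a divisor is trivial, since an \<open>m\<close>-th root of unity is an \<open>n\<close>-th root of
  unity whenever \<open>m\<close> divides \<open>n\<close>. Conversely, for coprime \<open>a\<close> and \<open>b\<close> every \<open>(a b)\<close>-th root of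
  unity factors, via a Bezout identity \<open>a x = b y + 1\<close>, as an \<open>a\<close>-th root times a \<open>b\<close>-th root,
  and these factors depend only on the given root. Realising the two families of factors
  at points \<open>x\<^sub>1\<close> and \<open>x\<^sub>2\<close>, the characters being homomorphisms realise the original
  family at \<open>x\<^sub>1 + x\<^sub>2\<close>.\<close>

lemma roots_of_unity_subset_dvd:
  assumes "m dvd n"
  shows "roots_of_unity m \<subseteq> roots_of_unity n"
  using assms by (auto simp: roots_of_unity_def power_mult elim!: dvdE)

lemma N_PR_dvd:
  assumes "m dvd n" and "N_PR n E"
  shows "N_PR m E"
  using assms roots_of_unity_subset_dvd[OF assms(1)] unfolding N_PR_def by blast

lemma coprime_power_eq_one_split:
  fixes a b :: nat
  assumes "coprime a b"
  obtains u v :: "'a::comm_monoid_mult \<Rightarrow> 'a"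
  where "\<And>z. z ^ (a * b) = 1 \<Longrightarrow> u z ^ a = 1 \<and> v z ^ b = 1 \<and> z = u z * v z"
proof (cases "a = 0")
  case True
  with assms have "b = 1" by simp
  with True show ?thesis by (intro that[of id "\<lambda>_. 1"]) simp
next
  case False
  with assms obtain x y :: nat where bezout: "a * x = b * y + 1"
    using bezout_nat[of a b] by auto
  \<comment> \<open>when \<open>z ^ (a * b) = 1\<close>, the power \<open>z ^ (b * y * (a - 1))\<close> inverts \<open>z ^ (b * y)\<close>,
    so the factorisation needs no division\<close>
  have exponent: "b * (y * (a - 1)) + a * x = 1 + (a * b) * y"
    using False bezout by (cases a) (auto simp: algebra_simps)
  show ?thesis
  proof (rule that[of "\<lambda>z. z ^ (b * (y * (a - 1)))" "\<lambda>z. z ^ (a * x)"], intro conjI)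
    fix z :: 'a
    assume z: "z ^ (a * b) = 1"
    have "(z ^ (b * (y * (a - 1)))) ^ a = (z ^ (a * b)) ^ (y * (a - 1))"
      and "(z ^ (a * x)) ^ b = (z ^ (a * b)) ^ x"
      by (simp_all only: power_mult[symmetric] mult_ac)
    with z show "(z ^ (b * (y * (a - 1)))) ^ a = 1" "(z ^ (a * x)) ^ b = 1"
      by simp_all
    have "z ^ (b * (y * (a - 1))) * z ^ (a * x) = z ^ (1 + (a * b) * y)"
      by (simp only: power_add[symmetric] exponent)
    also have "\<dots> = z * (z ^ (a * b)) ^ y"
      by (simp only: power_add power_mult power_one_right)
    finally show "z = z ^ (b * (y * (a - 1))) * z ^ (a * x)"
      using z by simp
  qed
qed

lemma N_PR_mult_coprime:
  fixes E :: "('g::{topological_space, ab_group_add} \<Rightarrow> complex) set"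
  assumes "E \<subseteq> dual_group" and "coprime a b" and "N_PR a E" and "N_PR b E"
  shows "N_PR (a * b) E"
  unfolding N_PR_def
proof (intro allI impI)
  fix \<phi> :: "('g \<Rightarrow> complex) \<Rightarrow> complex"
  assume \<phi>: "\<forall>\<gamma>\<in>E. \<phi> \<gamma> \<in> roots_of_unity (a * b)"
  obtain u v :: "complex \<Rightarrow> complex"
    where split: "\<And>z. z ^ (a * b) = 1 \<Longrightarrow> u z ^ a = 1 \<and> v z ^ b = 1 \<and> z = u z * v z"
    using coprime_power_eq_one_split[OF assms(2)] by blast
  obtain x\<^sub>1 :: 'g where x\<^sub>1: "\<forall>\<gamma>\<in>E. u (\<phi> \<gamma>) = \<gamma> x\<^sub>1"
    using assms(3) \<phi> split unfolding N_PR_def roots_of_unity_def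
    by (erule_tac x = "u \<circ> \<phi>" in allE) auto
  obtain x\<^sub>2 :: 'g where x\<^sub>2: "\<forall>\<gamma>\<in>E. v (\<phi> \<gamma>) = \<gamma> x\<^sub>2"
    using assms(4) \<phi> split unfolding N_PR_def roots_of_unity_def
    by (erule_tac x = "v \<circ> \<phi>" in allE) auto
  have "\<phi> \<gamma> = \<gamma> (x\<^sub>1 + x\<^sub>2)" if "\<gamma> \<in> E" for \<gamma>
  proof -
    have "\<phi> \<gamma> = u (\<phi> \<gamma>) * v (\<phi> \<gamma>)"
      using that \<phi> split unfolding roots_of_unity_def by blast
    also have "\<dots> = \<gamma> x\<^sub>1 * \<gamma> x\<^sub>2"
      using that x\<^sub>1 x\<^sub>2 by simp
    also have "\<dots> = \<gamma> (x\<^sub>1 + x\<^sub>2)"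
      using that assms(1) unfolding dual_group_def by (auto simp del: mult.commute)
    finally show ?thesis .
  qed
  then show "\<exists>x::'g. \<forall>\<gamma>\<in>E. \<phi> \<gamma> = \<gamma> x"
    by blast
qed

theorem corollary2p5:
  fixes E :: "('g::{topological_group_add, ab_group_add, t2_space} \<Rightarrow> complex) set"
    and a b :: nat
  assumes "compact (UNIV :: 'g set)"
    and "E \<subseteq> dual_group"
    and "a > 0" and "b > 0" and "coprime a b"
  shows "N_PR (a * b) E \<longleftrightarrow> N_PR a E \<and> N_PR b E"
  using N_PR_dvd[of a "a * b" E] N_PR_dvd[of b "a * b" E]
    N_PR_mult_coprime[OF assms(2,5)]
  by auto

end
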